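(* Let $G$ be a connected (finite, simple) graph, let $\mathcal{F}$ be a maximum induced forest of $G$ having the fewest connected components among all maximum induced forests of $G$, let $H$ be the contracted graph and let $B$ be a skeleton of $H$ whose configuration vector is lexicographically highest among all skeletons of $H$, with inner skeleton $B_1$ (all as defined in the context). Let $v$ be a non-tree vertex of degree exactly $2$ in $B_1$ whose two neighbors in $B_1$ are a tree vertex $x_T$ and a vertex $x'$, where the tree $T$ consists of a single edge $u_1u_2$. If $v$ has no 2-edge in $H$ to any tree vertex other than $x_T$, then $v$ has no edge in $H$ to any tree vertex other than $x_T$.
   Context: A maximum induced forest of $G$ is an induced forest with the maximum number of vertices. Let $\mathcal{T}$ be the set of connected components (trees) of $\mathcal{F}$ and $S=V(G)\setminus V(\mathcal{F})$. The graph $H$ has vertex set $\{x_T : T\in\mathcal{T}\}\cup S$ (the $x_T$ are tree vertices, the vertices of $S$ non-tree vertices) and edge set consisting of all edges of $G[S]$ together with all pairs $ux_T$ with $u\in S$, $T\in\mathcal{T}$ such that $u$ has at least one neighbor in $V(T)$ in $G$. An edge $ux_T$ of $H$ is a 2-edge if $u$ has at least two neighbors in $V(T)$ in $G$; all other edges of $H$ are 1-edges. A skeleton is a spanning tree of $H$ rooted at some tree vertex, with all edges directed towards the root. For a skeleton $B$ with root $r$, the level $\ell_B(v)$ of a vertex $v$ is the number of vertices on the path from $v$ to $r$ in $B$, and the configuration vector of $B$ is $\langle |E_2(B)|, \sum_{v:\ell_B(v)=1}\deg_B(v), \ldots,\sum_{v:\ell_B(v)=|V(H)|}\deg_B(v)\rangle$,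 where $E_2(B)$ is the set of 2-edges of $B$ and $\deg_B(v)$ the total degree of $v$ in $B$. Let $L_S$ be the set of vertices of $S$ that are leaves of $B$; the inner skeleton is $B_1=B[V(B)\setminus L_S]$. *)

theory Defs
  imports Main
begin

definition simple_graph :: "'a set \<Rightarrow> ('a \<Rightarrow> 'a \<Rightarrow> bool) \<Rightarrow> bool" where
  "simple_graph V adj \<longleftrightarrow> finite V \<and>
     (\<forall>u w. adj u w \<longrightarrow> u \<in> V \<and> w \<in> V \<and> u \<noteq> w \<and> adj w u)"

definition walk_in :: "'a set \<Rightarrow> ('a \<Rightarrow> 'a \<Rightarrow> bool) \<Rightarrow> 'a list \<Rightarrow> bool" where
  "walk_in X adj p \<longleftrightarrow> p \<noteq> [] \<and> set p \<subseteq> X \<and>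
     (\<forall>i. Suc i < length p \<longrightarrow> adj (p ! i) (p ! Suc i))"

definition connected_on :: "'a set \<Rightarrow> ('a \<Rightarrow> 'a \<Rightarrow> bool) \<Rightarrow> bool" where
  "connected_on X adj \<longleftrightarrow> X \<noteq> {} \<and>
     (\<forall>u\<in>X. \<forall>w\<in>X. \<exists>p. walk_in X adj p \<and> hd p = u \<and> last p = w)"

definition has_cycle :: "'a set \<Rightarrow> ('a \<Rightarrow> 'a \<Rightarrow> bool) \<Rightarrow> bool" where
  "has_cycle X adj \<longleftrightarrow> (\<exists>c. length c \<ge> 3 \<and> distinct c \<and> set c \<subseteq> X \<and>
     (\<forall>i<length c. adj (c ! i) (c ! ((i + 1) mod length c))))"

definition forest_on :: "'a set \<Rightarrow> ('a \<Rightarrow> 'a \<Rightarrow> bool) \<Rightarrow> bool" where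
  "forest_on X adj \<longleftrightarrow> \<not> has_cycle X adj"

definition tree_on :: "'a set \<Rightarrow> ('a \<Rightarrow> 'a \<Rightarrow> bool) \<Rightarrow> bool" where
  "tree_on X adj \<longleftrightarrow> connected_on X adj \<and> forest_on X adj"

definition components :: "'a set \<Rightarrow> ('a \<Rightarrow> 'a \<Rightarrow> bool) \<Rightarrow> 'a set set" where
  "components X adj =
     {{w \<in> X. \<exists>p. walk_in X adj p \<and> hd p = u \<and> last p = w} | u. u \<in> X}"

definition induced_forest :: "'a set \<Rightarrow> ('a \<Rightarrow> 'a \<Rightarrow> bool) \<Rightarrow> 'a set \<Rightarrow> bool" where
  "induced_forest V adj F \<longleftrightarrow> F \<subseteq> V \<and> forest_on F adj"

definition max_induced_forest :: "'a set \<Rightarrow> ('a \<Rightarrow> 'a \<Rightarrow> bool) \<Rightarrow> 'a set \<Rightarrow> bool" where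
  "max_induced_forest V adj F \<longleftrightarrow> induced_forest V adj F \<and>
     (\<forall>F'. induced_forest V adj F' \<longrightarrow> card F' \<le> card F)"

definition min_comp_max_forest :: "'a set \<Rightarrow> ('a \<Rightarrow> 'a \<Rightarrow> bool) \<Rightarrow> 'a set \<Rightarrow> bool" where
  "min_comp_max_forest V adj F \<longleftrightarrow> max_induced_forest V adj F \<and>
     (\<forall>F'. max_induced_forest V adj F' \<longrightarrow>
        card (components F adj) \<le> card (components F' adj))"

text \<open>Vertices of the contracted graph H: tree vertices x_T (represented by V(T)) and
non-tree vertices (elements of S = V - F).\<close>
datatype 'a hvert = TreeV "'a set" | NonTreeV 'a

definition Hverts :: "'a set \<Rightarrow> ('a \<Rightarrow> 'a \<Rightarrow> bool) \<Rightarrow> 'a set \<Rightarrow> 'a hvert set" where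
  "Hverts V adj F = TreeV ` components F adj \<union> NonTreeV ` (V - F)"

fun Hadj :: "'a set \<Rightarrow> ('a \<Rightarrow> 'a \<Rightarrow> bool) \<Rightarrow> 'a set \<Rightarrow> 'a hvert \<Rightarrow> 'a hvert \<Rightarrow> bool" where
  "Hadj V adj F (NonTreeV u) (NonTreeV w) = (u \<in> V - F \<and> w \<in> V - F \<and> adj u w)"
| "Hadj V adj F (NonTreeV u) (TreeV C) =
     (u \<in> V - F \<and> C \<in> components F adj \<and> (\<exists>w\<in>C. adj u w))"
| "Hadj V adj F (TreeV C) (NonTreeV u) =
     (u \<in> V - F \<and> C \<in> components F adj \<and> (\<exists>w\<in>C. adj u w))"
| "Hadj V adj F (TreeV C) (TreeV D) = False"

fun two_edge :: "'a set \<Rightarrow> ('a \<Rightarrow> 'a \<Rightarrow> bool) \<Rightarrow> 'a set \<Rightarrow> 'a hvert \<Rightarrow> 'a hvert \<Rightarrow> bool" where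
  "two_edge V adj F (NonTreeV u) (TreeV C) =
     (Hadj V adj F (NonTreeV u) (TreeV C) \<and> card {w \<in> C. adj u w} \<ge> 2)"
| "two_edge V adj F (TreeV C) (NonTreeV u) =
     (Hadj V adj F (NonTreeV u) (TreeV C) \<and> card {w \<in> C. adj u w} \<ge> 2)"
| "two_edge V adj F x y = False"

definition skeleton :: "'a set \<Rightarrow> ('a \<Rightarrow> 'a \<Rightarrow> bool) \<Rightarrow> 'a set \<Rightarrow>
    ('a hvert \<Rightarrow> 'a hvert \<Rightarrow> bool) \<Rightarrow> 'a hvert \<Rightarrow> bool" where
  "skeleton V adj F B r \<longleftrightarrow>
     (\<forall>x y. B x y \<longrightarrow> Hadj V adj F x y) \<and> (\<forall>x y. B x y \<longrightarrow> B y x) \<and>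
     tree_on (Hverts V adj F) B \<and> r \<in> TreeV ` components F adj"

text \<open>Level: number of vertices on the (unique) path from v to r in B.\<close>
definition level :: "'b set \<Rightarrow> ('b \<Rightarrow> 'b \<Rightarrow> bool) \<Rightarrow> 'b \<Rightarrow> 'b \<Rightarrow> nat" where
  "level X B r v = (LEAST n. \<exists>p. walk_in X B p \<and> distinct p \<and> hd p = v \<and> last p = r \<and> length p = n)"

definition bdeg :: "'b set \<Rightarrow> ('b \<Rightarrow> 'b \<Rightarrow> bool) \<Rightarrow> 'b \<Rightarrow> nat" where
  "bdeg X B v = card {w \<in> X. B v w}"

definition conf_vec :: "'a set \<Rightarrow> ('a \<Rightarrow> 'a \<Rightarrow> bool) \<Rightarrow> 'a set \<Rightarrow>
    ('a hvert \<Rightarrow> 'a hvert \<Rightarrow> bool) \<Rightarrow> 'a hvert \<Rightarrow> nat list" where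
  "conf_vec V adj F B r =
     (let X = Hverts V adj F in
       card {{x, y} | x y. B x y \<and> two_edge V adj F x y} #
       map (\<lambda>i. \<Sum>v\<in>{v \<in> X. level X B r v = i}. bdeg X B v) [1..<card X + 1])"

definition lex_highest_skeleton :: "'a set \<Rightarrow> ('a \<Rightarrow> 'a \<Rightarrow> bool) \<Rightarrow> 'a set \<Rightarrow>
    ('a hvert \<Rightarrow> 'a hvert \<Rightarrow> bool) \<Rightarrow> 'a hvert \<Rightarrow> bool" where
  "lex_highest_skeleton V adj F B r \<longleftrightarrow> skeleton V adj F B r \<and>
     (\<forall>B' r'. skeleton V adj F B' r' \<longrightarrow>
        (conf_vec V adj F B r, conf_vec V adj F B' r') \<notin> lexord {(a, b). a < b})"

text \<open>Vertex set of the inner skeleton B_1: remove the non-tree leaves of B.\<close>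
definition inner_verts :: "'a set \<Rightarrow> ('a \<Rightarrow> 'a \<Rightarrow> bool) \<Rightarrow> 'a set \<Rightarrow>
    ('a hvert \<Rightarrow> 'a hvert \<Rightarrow> bool) \<Rightarrow> 'a hvert set" where
  "inner_verts V adj F B =
     Hverts V adj F - {x \<in> NonTreeV ` (V - F). bdeg (Hverts V adj F) B x = 1}"

end

theory Submission
  imports Defs
begin

text \<open>Write s for the vertex of G behind v; by hypothesis s has at most one neighbour in
every tree of F other than T. As F is maximum, F + s contains a cycle, so s is adjacent to
both u1 and u2. If s had a neighbour w in some other tree, then F - u1 + s would be an
induced forest of the same size in which s joins u2 to the tree of w, hence one with fewer
components than F.\<close>

definition reach :: "'a set \<Rightarrow> ('a \<Rightarrow> 'a \<Rightarrow> bool) \<Rightarrow> 'a \<Rightarrow> 'a \<Rightarrow> bool" where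
  "reach X adj u w \<longleftrightarrow> (\<exists>p. walk_in X adj p \<and> hd p = u \<and> last p = w)"

definition induced_adj :: "'a set \<Rightarrow> ('a \<Rightarrow> 'a \<Rightarrow> bool) \<Rightarrow> 'a \<Rightarrow> 'a \<Rightarrow> bool" where
  "induced_adj X adj a b \<longleftrightarrow> a \<in> X \<and> b \<in> X \<and> adj a b"

lemma walk_in_Cons:
  "walk_in X adj (a # p) \<longleftrightarrow> a \<in> X \<and> (p = [] \<or> adj a (hd p) \<and> walk_in X adj p)"
  by (cases p) (auto simp: walk_in_def nth_Cons split: nat.splits)

lemma reach_iff_rtranclp: "reach X adj u w \<longleftrightarrow> u \<in> X \<and> (induced_adj X adj)\<^sup>*\<^sup>* u w"
proof
  assume "reach X adj u w"
  then obtain p where "walk_in X adj p" "hd p = u" "last p = w"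
    by (auto simp: reach_def)
  then show "u \<in> X \<and> (induced_adj X adj)\<^sup>*\<^sup>* u w"
  proof (induction p arbitrary: u)
    case (Cons a p)
    then show ?case
      by (cases "p = []")
        (auto simp: walk_in_Cons induced_adj_def intro: converse_rtranclp_into_rtranclp)
  qed (simp add: walk_in_def)
next
  assume "u \<in> X \<and> (induced_adj X adj)\<^sup>*\<^sup>* u w"
  then have "(induced_adj X adj)\<^sup>*\<^sup>* u w" "u \<in> X" by simp_all
  then show "reach X adj u w"
  proof (induction rule: converse_rtranclp_induct)
    case base
    then show ?case
      by (auto simp: reach_def walk_in_def intro: exI[of _ "[w]"])
  next
    case (step a b)
    then obtain p where "walk_in X adj p" "hd p = b" "last p = w"
      by (auto simp: reach_def induced_adj_def)
    moreover have "p \<noteq> []"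
      using \<open>walk_in X adj p\<close> by (simp add: walk_in_def)
    ultimately show ?case
      using step.hyps(1) unfolding reach_def
      by (intro exI[of _ "a # p"]) (auto simp: walk_in_Cons induced_adj_def)
  qed
qed

lemma reach_in: "reach X adj u w \<Longrightarrow> u \<in> X \<and> w \<in> X"
  by (auto simp: reach_iff_rtranclp induced_adj_def elim: rtranclp.cases)

lemma reach_refl: "u \<in> X \<Longrightarrow> reach X adj u u"
  by (simp add: reach_iff_rtranclp)

lemma reach_edge: "adj a b \<Longrightarrow> a \<in> X \<Longrightarrow> b \<in> X \<Longrightarrow> reach X adj a b"
  by (auto simp: reach_iff_rtranclp induced_adj_def)

lemma reach_trans: "reach X adj u x \<Longrightarrow> reach X adj x w \<Longrightarrow> reach X adj u w"
  by (auto simp: reach_iff_rtranclp)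

lemma reach_sym: "symp adj \<Longrightarrow> reach X adj u w \<Longrightarrow> reach X adj w u"
  using reach_in[of X adj u w]
  by (auto simp: reach_iff_rtranclp induced_adj_def symp_def
      intro: sympD[OF symp_rtranclp] sympI)

lemma reach_map:
  assumes "f ` X \<subseteq> Y"
    and "\<And>a b. induced_adj X adj a b \<Longrightarrow> f a = f b \<or> adj (f a) (f b)"
    and "reach X adj u w"
  shows "reach Y adj (f u) (f w)"
proof -
  have "(induced_adj X adj)\<^sup>*\<^sup>* u w" "u \<in> X"
    using assms(3) by (simp_all add: reach_iff_rtranclp)
  then show ?thesis
  proof (induction rule: rtranclp_induct)
    case (step a b)
    have "f a \<in> Y" "f b \<in> Y"
      using step.hyps(2) assms(1) by (auto simp: induced_adj_def)
    then have "f a = f b \<or> reach Y adj (f a) (f b)"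
      using assms(2)[OF step.hyps(2)] reach_edge by metis
    moreover have "reach Y adj (f u) (f a)"
      using step.IH step.prems by simp
    ultimately show ?case
      using reach_trans by metis
  next
    case base
    show ?case
      using assms(1) base by (auto intro: reach_refl)
  qed
qed

lemma reach_mono: "reach X adj u w \<Longrightarrow> X \<subseteq> Y \<Longrightarrow> reach Y adj u w"
  using reach_map[of id X Y adj] by (auto simp: induced_adj_def)

definition component_of :: "'a set \<Rightarrow> ('a \<Rightarrow> 'a \<Rightarrow> bool) \<Rightarrow> 'a \<Rightarrow> 'a set" where
  "component_of X adj u = {w. reach X adj u w}"

lemma components_eq_image: "components X adj = component_of X adj ` X"
  by (auto simp: components_def component_of_def reach_def[symmetric] dest: reach_in)

lemma component_of_eq:
  "symp adj \<Longrightarrow> reach X adj u w \<Longrightarrow> component_of X adj u = component_of X adj w"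
  by (auto simp: component_of_def intro: reach_trans reach_sym)

lemma components_eq_component_of:
  assumes "symp adj" "C \<in> components X adj" "x \<in> C"
  shows "C = component_of X adj x"
proof -
  obtain u where C: "C = component_of X adj u"
    using assms(2) by (auto simp: components_eq_image)
  with assms(3) have "reach X adj u x"
    by (simp add: component_of_def)
  with assms(1) C show ?thesis
    by (simp add: component_of_eq)
qed

lemma components_subset: "C \<in> components X adj \<Longrightarrow> C \<subseteq> X"
  by (auto simp: components_eq_image component_of_def dest: reach_in)

lemma components_reach_iff:
  assumes "symp adj" "C \<in> components X adj" "reach X adj a b"
  shows "a \<in> C \<longleftrightarrow> b \<in> C"
proof
  assume "a \<in> C"
  with assms show "b \<in> C"
    using components_eq_component_of by (fastforce simp: component_of_def)
next
  assume "b \<in> C"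
  with assms show "a \<in> C"
    using components_eq_component_of reach_sym by (fastforce simp: component_of_def)
qed

lemma card_components_less:
  assumes "symp adj" "finite X" "f ` X \<subseteq> Y"
    and onto: "\<And>y. y \<in> Y \<Longrightarrow> \<exists>x\<in>X. reach Y adj y (f x)"
    and hom: "\<And>a b. reach X adj a b \<Longrightarrow> reach Y adj (f a) (f b)"
    and merge: "a \<in> X" "b \<in> X" "\<not> reach X adj a b" "reach Y adj (f a) (f b)"
  shows "card (components Y adj) < card (components X adj)"
proof -
  define G where "G C = (\<Union>x\<in>C. component_of Y adj (f x))" for C
  have G: "G (component_of X adj x) = component_of Y adj (f x)" if "x \<in> X" for x
  proof
    show "G (component_of X adj x) \<subseteq> component_of Y adj (f x)"
      using hom by (auto simp: G_def component_of_def intro: reach_trans)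
    show "component_of Y adj (f x) \<subseteq> G (component_of X adj x)"
      using that by (auto simp: G_def component_of_def intro: reach_refl)
  qed
  have "components Y adj = (\<lambda>x. component_of Y adj (f x)) ` X"
  proof
    show "components Y adj \<subseteq> (\<lambda>x. component_of Y adj (f x)) ` X"
    proof
      fix D assume "D \<in> components Y adj"
      then obtain y where "y \<in> Y" "D = component_of Y adj y"
        by (auto simp: components_eq_image)
      with onto obtain x where "x \<in> X" "D = component_of Y adj (f x)"
        using component_of_eq[OF assms(1)] by metis
      then show "D \<in> (\<lambda>x. component_of Y adj (f x)) ` X" by blast
    qed
    show "(\<lambda>x. component_of Y adj (f x)) ` X \<subseteq> components Y adj"
      using assms(3) by (auto simp: components_eq_image)
  qed
  also have "\<dots> = G ` components X adj"
    using G by (simp add: components_eq_image image_image)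
  finally have image: "components Y adj = G ` components X adj" .
  have "G (component_of X adj a) = G (component_of X adj b)"
    using G merge assms(1) by (simp add: component_of_eq)
  moreover have "component_of X adj a \<noteq> component_of X adj b"
    using merge by (auto simp: component_of_def dest: reach_refl)
  ultimately have "\<not> inj_on G (components X adj)"
    using merge by (auto simp: components_eq_image inj_on_def)
  moreover have "finite (components X adj)"
    using assms(2) by (simp add: components_eq_image)
  ultimately show ?thesis
    unfolding image by (meson card_image_le eq_card_imp_inj_on le_neq_implies_less)
qed

lemma cyclic_adj_rotate:
  assumes "\<forall>i<length c. adj (c ! i) (c ! ((i + 1) mod length c))"
  shows "\<forall>i<length c. adj (rotate k c ! i) (rotate k c ! ((i + 1) mod length c))"
proof (intro allI impI)
  fix i assume i: "i < length c"
  then have "0 < length c" by linarith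
  then have "(k + i) mod length c < length c" "(i + 1) mod length c < length c" by simp_all
  with assms have "adj (c ! ((k + i) mod length c)) (c ! (((k + i) mod length c + 1) mod length c))"
    by blast
  moreover have "(k + (i + 1) mod length c) mod length c = ((k + i) mod length c + 1) mod length c"
    by (simp add: mod_simps add.assoc)
  ultimately show "adj (rotate k c ! i) (rotate k c ! ((i + 1) mod length c))"
    using i nth_rotate[of i c k] nth_rotate[of "(i + 1) mod length c" c k]
      \<open>(i + 1) mod length c < length c\<close>
    by simp
qed

lemma walk_in_cycle_tail:
  assumes "\<forall>i<length (v # p). adj ((v # p) ! i) ((v # p) ! ((i + 1) mod length (v # p)))"
    and "p \<noteq> []" "set p \<subseteq> X"
  shows "walk_in X adj p"
  unfolding walk_in_def
proof (intro conjI allI impI)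
  fix i assume "Suc i < length p"
  then show "adj (p ! i) (p ! Suc i)"
    using assms(1) by (auto dest: spec[of _ "Suc i"])
qed (use assms(2,3) in auto)

lemma forest_subset: "forest_on X adj \<Longrightarrow> Y \<subseteq> X \<Longrightarrow> forest_on Y adj"
  unfolding forest_on_def has_cycle_def by (meson order_trans)

lemma has_cycle_through:
  assumes "has_cycle (insert v X) adj" "\<not> has_cycle X adj"
  obtains p where "length p \<ge> 2" "distinct (v # p)" "set p \<subseteq> X"
    and "\<forall>i<length (v # p). adj ((v # p) ! i) ((v # p) ! ((i + 1) mod length (v # p)))"
proof -
  obtain c where c: "length c \<ge> 3" "distinct c" "set c \<subseteq> insert v X"
    and cyc: "\<forall>i<length c. adj (c ! i) (c ! ((i + 1) mod length c))"
    using assms(1) by (auto simp: has_cycle_def)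
  have "v \<in> set c"
    using assms(2) c cyc by (auto simp: has_cycle_def)
  then obtain k where k: "k < length c" "c ! k = v"
    by (auto simp: in_set_conv_nth)
  define p where "p = tl (rotate k c)"
  have "rotate k c ! 0 = v"
    using k nth_rotate[of 0 c k] by (cases c) auto
  then have vp: "rotate k c = v # p"
    unfolding p_def using c(1) by (cases "rotate k c") auto
  then have len: "length (v # p) = length c" and dist: "distinct (v # p)" and "set (v # p) = set c"
    using c(2) by (metis length_rotate, metis distinct_rotate, metis set_rotate)
  then have "set p \<subseteq> X"
    using c(3) by auto
  moreover have "length p \<ge> 2"
    using len c(1) by simp
  moreover have "\<forall>i<length (v # p). adj ((v # p) ! i) ((v # p) ! ((i + 1) mod length (v # p)))"
    using cyclic_adj_rotate[OF cyc, of k] vp by (metis length_rotate)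
  ultimately show thesis
    using that dist by blast
qed

lemma forest_insert:
  assumes "symp adj" "forest_on X adj" "v \<notin> X"
    and unique_nbr: "\<And>a b. a \<in> X \<Longrightarrow> b \<in> X \<Longrightarrow> adj v a \<Longrightarrow> adj v b \<Longrightarrow>
      reach X adj a b \<Longrightarrow> a = b"
  shows "forest_on (insert v X) adj"
  unfolding forest_on_def
proof
  assume "has_cycle (insert v X) adj"
  then obtain p where len: "length p \<ge> 2" and dist: "distinct (v # p)" and "set p \<subseteq> X"
    and cyc: "\<forall>i<length (v # p). adj ((v # p) ! i) ((v # p) ! ((i + 1) mod length (v # p)))"
    using has_cycle_through[of v X adj] assms(2) unfolding forest_on_def by metis
  moreover have "p \<noteq> []"
    using len by auto
  ultimately have "reach X adj (hd p) (last p)"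
    using walk_in_cycle_tail[OF cyc] by (auto simp: reach_def)
  moreover have "adj v (hd p)"
    using len spec[OF cyc, of 0] by (cases p) auto
  moreover have "adj v (last p)"
    using spec[OF cyc, of "length p"] assms(1) \<open>p \<noteq> []\<close>
    by (simp add: last_conv_nth symp_def)
  ultimately have "hd p = last p"
    using unique_nbr \<open>set p \<subseteq> X\<close> \<open>p \<noteq> []\<close> by (meson hd_in_set last_in_set subsetD)
  with dist len show False
    by (cases p) (auto split: if_splits)
qed

lemma simple_graph_symp: "simple_graph V adj \<Longrightarrow> symp adj"
  by (auto simp: simple_graph_def intro: sympI)

lemma max_induced_forest_finite: "simple_graph V adj \<Longrightarrow> max_induced_forest V adj F \<Longrightarrow> finite F"
  by (auto simp: simple_graph_def max_induced_forest_def induced_forest_def intro: finite_subset)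

lemma max_induced_forest_joined_neighbours:
  assumes G: "simple_graph V adj" and F: "max_induced_forest V adj F" and s: "s \<in> V - F"
  obtains a b where "a \<in> F" "b \<in> F" "a \<noteq> b" "adj s a" "adj s b" "reach F adj a b"
proof -
  have "\<not> forest_on (insert s F) adj"
  proof
    assume "forest_on (insert s F) adj"
    with F s have "card (insert s F) \<le> card F"
      by (auto simp: max_induced_forest_def induced_forest_def)
    with s max_induced_forest_finite[OF G F] show False
      by simp
  qed
  moreover have "forest_on F adj"
    using F by (simp add: max_induced_forest_def induced_forest_def)
  ultimately show thesis
    using forest_insert[OF simple_graph_symp[OF G], of F s] s that by blast
qed

lemma forest_exchange_edge_tree:
  assumes G: "simple_graph V adj" and F: "forest_on F adj"
    and T: "T \<in> components F adj" "T = {u1, u2}" and s: "s \<notin> F"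
    and unique_nbr: "\<And>a b. a \<in> F - T \<Longrightarrow> b \<in> F - T \<Longrightarrow> adj s a \<Longrightarrow> adj s b \<Longrightarrow>
      reach F adj a b \<Longrightarrow> a = b"
  shows "forest_on (insert s (F - {u1})) adj"
proof (rule forest_insert[OF simple_graph_symp[OF G] forest_subset[OF F]])
  fix a b
  assume ab: "a \<in> F - {u1}" "b \<in> F - {u1}" "adj s a" "adj s b" "reach (F - {u1}) adj a b"
  then have "reach F adj a b"
    by (auto intro: reach_mono)
  moreover have "a \<in> T \<longleftrightarrow> b \<in> T"
    using components_reach_iff[OF simple_graph_symp[OF G] T(1)] calculation by blast
  ultimately show "a = b"
    using ab T(2) unique_nbr[of a b] by (cases "a \<in> T") auto
qed (use s in auto)

lemma card_components_exchange_edge_tree: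
  assumes G: "simple_graph V adj" and "finite F"
    and T: "T \<in> components F adj" "T = {u1, u2}" "u1 \<noteq> u2"
    and s: "s \<notin> F" "adj s u2" "adj s w" "w \<in> F - T"
  shows "card (components (insert s (F - {u1})) adj) < card (components F adj)"
proof -
  have sym: "symp adj" using G by (rule simple_graph_symp)
  define F' where "F' = insert s (F - {u1})"
  define f where "f x = (if x = u1 then u2 else x)" for x
  have u2: "u2 \<in> F" "u2 \<in> F'" "u2 \<noteq> u1"
    using components_subset[OF T(1)] T(2,3) by (auto simp: F'_def)
  have "f ` F \<subseteq> F'"
    using u2 by (auto simp: f_def F'_def)
  moreover have "\<exists>x\<in>F. reach F' adj y (f x)" if "y \<in> F'" for y
  proof (cases "y = s")
    case True
    then have "reach F' adj y (f u2)"
      using s(2) u2 by (auto simp: f_def F'_def intro: reach_edge)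
    with u2 show ?thesis by blast
  next
    case False
    with that show ?thesis
      by (auto simp: f_def F'_def intro!: bexI[of _ y] reach_refl)
  qed
  moreover have "f a = f b \<or> adj (f a) (f b)" if "induced_adj F adj a b" for a b
  proof -
    have "a \<in> T \<longleftrightarrow> b \<in> T" "a \<noteq> b"
      using that components_reach_iff[OF sym T(1) reach_edge] G
      by (auto simp: induced_adj_def simple_graph_def)
    with that T(2) show ?thesis
      by (auto simp: f_def induced_adj_def)
  qed
  then have "reach F' adj (f a) (f b)" if "reach F adj a b" for a b
    using reach_map[OF \<open>f ` F \<subseteq> F'\<close>, of adj a b] that by simp
  moreover have "\<not> reach F adj w u2"
    using components_reach_iff[OF sym T(1), of w u2] s(4) T(2) by auto
  moreover have "reach F' adj (f w) (f u2)"
  proof -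
    have "w \<in> F'" "f w = w" "f u2 = u2"
      using s(4) T(2) u2 by (auto simp: F'_def f_def)
    moreover have "reach F' adj w s" "reach F' adj s u2"
      using s G u2(2) \<open>w \<in> F'\<close> by (auto simp: F'_def simple_graph_def intro!: reach_edge)
    ultimately show ?thesis
      using reach_trans by metis
  qed
  ultimately show ?thesis
    unfolding F'_def[symmetric]
    using card_components_less[OF sym \<open>finite F\<close>, of f F' w u2] s(4) u2(1) by blast
qed

lemma min_comp_max_forest_edge_tree_neighbours:
  assumes G: "simple_graph V adj" and F: "min_comp_max_forest V adj F"
    and T: "T \<in> components F adj" "T = {u1, u2}" "u1 \<noteq> u2"
    and s: "s \<in> V - F"
    and unique_nbr: "\<And>a b. a \<in> F - T \<Longrightarrow> b \<in> F - T \<Longrightarrow> adj s a \<Longrightarrow> adj s b \<Longrightarrow>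
      reach F adj a b \<Longrightarrow> a = b"
  shows "\<forall>w \<in> F - T. \<not> adj s w"
proof (intro ballI notI)
  fix w assume w: "w \<in> F - T" "adj s w"
  have Fmax: "max_induced_forest V adj F"
    using F by (simp add: min_comp_max_forest_def)
  then have FV: "F \<subseteq> V" and forest: "forest_on F adj"
    by (auto simp: max_induced_forest_def induced_forest_def)
  have fin: "finite F"
    using max_induced_forest_finite[OF G Fmax] .
  obtain a b where ab: "a \<in> F" "b \<in> F" "a \<noteq> b" "adj s a" "adj s b" "reach F adj a b"
    using max_induced_forest_joined_neighbours[OF G Fmax s] .
  have "a \<in> T \<longleftrightarrow> b \<in> T"
    using components_reach_iff[OF simple_graph_symp[OF G] T(1) ab(6)] .
  then have "{a, b} = T"
    using ab unique_nbr[of a b] T(2) by auto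
  then have "adj s u2"
    using ab T(2) by auto
  define F' where "F' = insert s (F - {u1})"
  have "max_induced_forest V adj F'"
  proof -
    have "induced_forest V adj F'"
      using forest_exchange_edge_tree[OF G forest T(1,2) _ unique_nbr] s FV
      by (auto simp: induced_forest_def F'_def)
    moreover have "card F' = card F"
      using fin s T(2) components_subset[OF T(1)] card_Suc_Diff1[OF fin, of u1]
      by (simp add: F'_def)
    ultimately show ?thesis
      using Fmax by (simp add: max_induced_forest_def)
  qed
  then have "card (components F adj) \<le> card (components F' adj)"
    using F by (simp add: min_comp_max_forest_def)
  moreover have "card (components F' adj) < card (components F adj)"
    unfolding F'_def
    using card_components_exchange_edge_tree[OF G fin T _ \<open>adj s u2\<close> w(2,1)] s by blast
  ultimately show False
    by simp
qed

lemma neighbours_eq_if_not_two_edge: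
  assumes "finite F" "C \<in> components F adj" "s \<in> V - F"
    and "\<not> two_edge V adj F (NonTreeV s) (TreeV C)"
    and "a \<in> C" "b \<in> C" "adj s a" "adj s b"
  shows "a = b"
proof (rule ccontr)
  assume "a \<noteq> b"
  have "finite C"
    using components_subset[OF assms(2)] assms(1) by (rule finite_subset)
  then have "card {a, b} \<le> card {w \<in> C. adj s w}"
    using assms(5-8) by (intro card_mono) auto
  with \<open>a \<noteq> b\<close> assms(2-8) show False
    by auto
qed

theorem lemma28:
  fixes V :: "'a set" and adj :: "'a \<Rightarrow> 'a \<Rightarrow> bool" and F :: "'a set"
    and B :: "'a hvert \<Rightarrow> 'a hvert \<Rightarrow> bool" and r v x' :: "'a hvert"
    and T :: "'a set" and u1 u2 :: 'a
  assumes "simple_graph V adj" and "connected_on V adj"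
    and "min_comp_max_forest V adj F"
    and "lex_highest_skeleton V adj F B r"
    and "v \<in> NonTreeV ` (V - F)" and "v \<in> inner_verts V adj F B"
    and "T \<in> components F adj" and "T = {u1, u2}" and "u1 \<noteq> u2" and "adj u1 u2"
    and "{w \<in> inner_verts V adj F B. B v w} = {TreeV T, x'}" and "x' \<noteq> TreeV T"
    and "\<forall>C \<in> components F adj. C \<noteq> T \<longrightarrow> \<not> two_edge V adj F v (TreeV C)"
  shows "\<forall>C \<in> components F adj. C \<noteq> T \<longrightarrow> \<not> Hadj V adj F v (TreeV C)"
proof -
  obtain s where v: "v = NonTreeV s" and s: "s \<in> V - F"
    using assms(5) by blast
  have finF: "finite F"
    using assms(1,3) max_induced_forest_finite by (auto simp: min_comp_max_forest_def)
  have unique_nbr: "a = b"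
    if ab: "a \<in> F - T" "b \<in> F - T" "adj s a" "adj s b" "reach F adj a b" for a b
  proof -
    let ?C = "component_of F adj a"
    have C: "?C \<in> components F adj" "a \<in> ?C" "b \<in> ?C"
      using ab by (auto simp: components_eq_image component_of_def intro: reach_refl)
    with ab(1) assms(13) v have "\<not> two_edge V adj F (NonTreeV s) (TreeV ?C)"
      by blast
    from neighbours_eq_if_not_two_edge[OF finF C(1) s this C(2,3) ab(3,4)] show "a = b" .
  qed
  have no_nbr: "\<forall>w \<in> F - T. \<not> adj s w"
    using min_comp_max_forest_edge_tree_neighbours[OF assms(1,3,7-9) s unique_nbr] .
  show ?thesis
  proof (intro ballI impI notI)
    fix C assume C: "C \<in> components F adj" "C \<noteq> T" "Hadj V adj F v (TreeV C)"
    then obtain w where "w \<in> C" "adj s w"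
      using v by auto
    moreover have "w \<notin> T"
      using components_eq_component_of[OF simple_graph_symp[OF assms(1)]] C(1,2) assms(7) \<open>w \<in> C\<close>
      by metis
    ultimately show False
      using no_nbr components_subset[OF C(1)] by blast
  qed
qed

end
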